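(* Let $G=(V,E)$ be an unweighted, undirected simple graph on $n$ vertices, accessed only through cut queries. After performing $n$ initial cut queries, one can sample an edge of $E$ uniformly at random using $O(\log n)$ additional cut queries. In particular, $k$ independent uniformly random edges can be drawn using $n+O(k\log n)$ cut queries in total.
   Context: A cut query takes a set $S\subseteq V$ and returns $c(S)$, the number of edges of $G$ with exactly one endpoint in $S$. *)

theory Defs
  imports "HOL-Probability.Probability"
begin

definition simple_graph :: "'v set \<Rightarrow> 'v set set \<Rightarrow> bool" where
  "simple_graph V E \<longleftrightarrow> (\<forall>e\<in>E. e \<subseteq> V \<and> card e = 2)"

definition cut :: "'v set set \<Rightarrow> 'v set \<Rightarrow> nat" where
  "cut E S = card {e \<in> E. card (e \<inter> S) = 1}"

text \<open>Randomized adaptive cut-query algorithms: a query asks a set S and branches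
  on the answer; a random step draws a value from a (graph-independent) distribution.\<close>
datatype ('v, 'a) qalg =
    Return 'a
  | Query "'v set" "nat \<Rightarrow> ('v, 'a) qalg"
  | Rand "nat pmf" "nat \<Rightarrow> ('v, 'a) qalg"

primrec run :: "('v set \<Rightarrow> nat) \<Rightarrow> ('v, 'a) qalg \<Rightarrow> 'a pmf" where
  "run c (Return x) = return_pmf x"
| "run c (Query S f) = run c (f (c S))"
| "run c (Rand p f) = bind_pmf p (\<lambda>r. run c (f r))"

primrec queries_le :: "('v set \<Rightarrow> nat) \<Rightarrow> ('v, 'a) qalg \<Rightarrow> nat \<Rightarrow> bool" where
  "queries_le c (Return x) N = True"
| "queries_le c (Query S f) N = (N > 0 \<and> queries_le c (f (c S)) (N - 1))"
| "queries_le c (Rand p f) N = (\<forall>r\<in>set_pmf p. queries_le c (f r) N)"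

primrec iid_pmf :: "nat \<Rightarrow> 'a pmf \<Rightarrow> 'a list pmf" where
  "iid_pmf 0 p = return_pmf []"
| "iid_pmf (Suc k) p = bind_pmf p (\<lambda>x. map_pmf (Cons x) (iid_pmf k p))"

end

theory Submission
  imports Defs
begin

text \<open>The n singleton cuts are the degrees. A uniform edge is obtained by drawing a vertex v
  with probability proportional to its degree and then a uniform neighbour of v. To find the
  j-th neighbour of v, binary search over the vertex range suffices, since for v \<notin> T the number
  of neighbours of v in T is (c(T) + c({v}) - c(T \<union> {v})) / 2, which costs two cut queries per
  halving, i.e. O(log n) queries per sample.\<close>

primrec bind_qalg :: "('v, 'a) qalg \<Rightarrow> ('a \<Rightarrow> ('v, 'b) qalg) \<Rightarrow> ('v, 'b) qalg" where
  "bind_qalg (Return x) f = f x"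
| "bind_qalg (Query S g) f = Query S (\<lambda>a. bind_qalg (g a) f)"
| "bind_qalg (Rand p g) f = Rand p (\<lambda>r. bind_qalg (g r) f)"

lemma run_bind_qalg: "run c (bind_qalg A f) = bind_pmf (run c A) (\<lambda>x. run c (f x))"
  by (induction A) (auto simp: bind_return_pmf bind_assoc_pmf)

lemma queries_le_mono: "queries_le c A N \<Longrightarrow> N \<le> M \<Longrightarrow> queries_le c A M"
  by (induction A arbitrary: N M) auto

lemma queries_le_bind_qalg:
  assumes "queries_le c A N" and "\<And>x. x \<in> set_pmf (run c A) \<Longrightarrow> queries_le c (f x) M"
  shows "queries_le c (bind_qalg A f) (N + M)"
  using assms
proof (induction A arbitrary: N)
  case (Return x)
  then show ?case by (auto intro: queries_le_mono)
next
  case (Query S g)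
  then show ?case by (cases N) auto
next
  case (Rand p g)
  then show ?case by (simp; metis rangeI)
qed

primrec query_list :: "'v set list \<Rightarrow> (nat list \<Rightarrow> ('v, 'a) qalg) \<Rightarrow> ('v, 'a) qalg" where
  "query_list [] k = k []"
| "query_list (S # Ss) k = Query S (\<lambda>a. query_list Ss (\<lambda>as. k (a # as)))"

lemma run_query_list: "run c (query_list Ss k) = run c (k (map c Ss))"
  by (induction Ss arbitrary: k) auto

lemma queries_le_query_list:
  "queries_le c (k (map c Ss)) N \<Longrightarrow> queries_le c (query_list Ss k) (length Ss + N)"
  by (induction Ss arbitrary: k) auto

primrec repeat_qalg :: "nat \<Rightarrow> ('v, 'a) qalg \<Rightarrow> ('v, 'a list) qalg" where
  "repeat_qalg 0 B = Return []"
| "repeat_qalg (Suc k) B = bind_qalg B (\<lambda>x. bind_qalg (repeat_qalg k B) (\<lambda>xs. Return (x # xs)))"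

lemma run_repeat_qalg: "run c B = p \<Longrightarrow> run c (repeat_qalg k B) = iid_pmf k p"
  by (induction k) (auto simp: run_bind_qalg map_pmf_def)

lemma queries_le_repeat_qalg: "queries_le c B M \<Longrightarrow> queries_le c (repeat_qalg k B) (k * M)"
proof (induction k)
  case (Suc k)
  have "queries_le c (bind_qalg (repeat_qalg k B) (\<lambda>xs. Return (x # xs))) (k * M + 0)" for x
    using Suc by (intro queries_le_bind_qalg) auto
  then have "queries_le c (repeat_qalg (Suc k) B) (M + k * M)"
    using Suc.prems by (auto intro: queries_le_bind_qalg)
  then show ?case by simp
qed simp

definition neighbours :: "'v set set \<Rightarrow> 'v \<Rightarrow> 'v set" where
  "neighbours E v = {u. {v, u} \<in> E}"

lemma simple_graph_edgeD: "simple_graph V E \<Longrightarrow> e \<in> E \<Longrightarrow> e \<subseteq> V \<and> card e = 2"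
  by (simp add: simple_graph_def)

lemma simple_graph_finite_edges: "simple_graph V E \<Longrightarrow> finite V \<Longrightarrow> finite E"
  by (rule finite_subset[of E "Pow V"]) (auto simp: simple_graph_def)

lemma neighbours_subset: "simple_graph V E \<Longrightarrow> neighbours E v \<subseteq> V"
  by (auto simp: neighbours_def simple_graph_def)

lemma not_in_neighbours: "simple_graph V E \<Longrightarrow> v \<notin> neighbours E v"
  by (auto simp: neighbours_def simple_graph_def)

lemma finite_neighbours: "simple_graph V E \<Longrightarrow> finite V \<Longrightarrow> finite (neighbours E v)"
  using finite_subset[OF neighbours_subset] .

lemma card_neighbours_filter:
  assumes "simple_graph V E"
  shows "card {u \<in> neighbours E v. P {v, u}} = card {e \<in> E. v \<in> e \<and> P e}"
proof -
  have inj: "inj_on (\<lambda>u. {v, u}) {u \<in> neighbours E v. P {v, u}}"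
    using not_in_neighbours[OF assms, of v] by (auto simp: inj_on_def doubleton_eq_iff)
  have "(\<lambda>u. {v, u}) ` {u \<in> neighbours E v. P {v, u}} = {e \<in> E. v \<in> e \<and> P e}"
  proof (intro equalityI subsetI)
    fix e assume e: "e \<in> {e \<in> E. v \<in> e \<and> P e}"
    then have "card e = 2" using simple_graph_edgeD[OF assms] by blast
    then obtain x y where "e = {x, y}" by (auto simp: card_2_iff)
    then have "e = {v, if x = v then y else x}" using e by (cases "x = v") (auto simp: insert_commute)
    then show "e \<in> (\<lambda>u. {v, u}) ` {u \<in> neighbours E v. P {v, u}}"
      using e unfolding neighbours_def by (intro image_eqI[of _ _ "if x = v then y else x"]) auto
  qed (auto simp: neighbours_def)
  then show ?thesis using card_image[OF inj] by simp
qed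

lemma cut_singleton: "cut E {v} = card {e \<in> E. v \<in> e}"
proof -
  have "card (e \<inter> {v}) = 1 \<longleftrightarrow> v \<in> e" for e by (cases "v \<in> e") auto
  then show ?thesis by (simp add: cut_def)
qed

lemma card_neighbours: "simple_graph V E \<Longrightarrow> card (neighbours E v) = cut E {v}"
  using card_neighbours_filter[of V E v "\<lambda>_. True"] by (simp add: cut_singleton)

lemma card_filter_eq_sum: "finite A \<Longrightarrow> card {x \<in> A. P x} = (\<Sum>x\<in>A. if P x then 1 else 0)"
  by (simp add: sum.If_cases Int_def conj_commute)

lemma card_doubleton_Int:
  "x \<noteq> y \<Longrightarrow> card ({x, y} \<inter> S) = (if x \<in> S then 1 else 0) + (if y \<in> S then 1 else 0)"
  by (cases "x \<in> S"; cases "y \<in> S") (simp_all add: Int_insert_left)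

lemma edge_cut_insert_vertex:
  assumes "card e = 2" and "v \<notin> T"
  shows "(if card (e \<inter> insert v T) = 1 then 1 else 0)
           + 2 * (if v \<in> e \<and> card (e \<inter> T) = 1 then 1 else 0)
       = (if card (e \<inter> T) = 1 then 1 else 0) + (if v \<in> e then 1 else (0::nat))"
proof -
  obtain x y where "x \<noteq> y" and e: "e = {x, y}" using assms(1) by (auto simp: card_2_iff)
  then show ?thesis unfolding e card_doubleton_Int[OF \<open>x \<noteq> y\<close>] using assms(2)
    by (cases "x \<in> T"; cases "y \<in> T"; cases "v = x"; cases "v = y") simp_all
qed

text \<open>Each edge from v into T leaves the cut when v joins T, while every other edge at v enters it.\<close>
lemma cut_insert_vertex:
  assumes g: "simple_graph V E" and "finite E" and v: "v \<notin> T"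
  shows "cut E (insert v T) + 2 * card (neighbours E v \<inter> T) = cut E T + cut E {v}"
proof -
  have "neighbours E v \<inter> T = {u \<in> neighbours E v. card ({v, u} \<inter> T) = 1}"
    using v not_in_neighbours[OF g, of v] by (auto simp: Int_insert_left split: if_splits)
  then have nT: "card (neighbours E v \<inter> T) = card {e \<in> E. v \<in> e \<and> card (e \<inter> T) = 1}"
    using card_neighbours_filter[OF g] by simp
  have "cut E (insert v T) + 2 * card {e \<in> E. v \<in> e \<and> card (e \<inter> T) = 1}
      = (\<Sum>e\<in>E. (if card (e \<inter> insert v T) = 1 then 1 else 0)
                 + 2 * (if v \<in> e \<and> card (e \<inter> T) = 1 then 1 else 0))"
    using \<open>finite E\<close> by (simp add: cut_def card_filter_eq_sum sum.distrib sum_distrib_left)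
  also have "\<dots> = (\<Sum>e\<in>E. (if card (e \<inter> T) = 1 then 1 else 0) + (if v \<in> e then 1 else 0))"
    using v simple_graph_edgeD[OF g] by (intro sum.cong refl edge_cut_insert_vertex) auto
  also have "\<dots> = cut E T + cut E {v}"
    unfolding cut_singleton using \<open>finite E\<close> by (simp add: cut_def card_filter_eq_sum sum.distrib)
  finally show ?thesis using nT by simp
qed

lemma sum_indicator_edge:
  assumes "simple_graph V E" and "finite V" and "e \<in> E"
  shows "(\<Sum>v\<in>V. if v \<in> e then 1 else 0) = (2::'a::semiring_1)"
proof -
  have "e \<subseteq> V" "card e = 2" using simple_graph_edgeD[OF assms(1,3)] by auto
  have "(\<Sum>v\<in>V. if v \<in> e then 1 else 0) = (\<Sum>v\<in>{v \<in> V. v \<in> e}. 1::'a)"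
    by (rule sum.inter_filter[OF \<open>finite V\<close>, symmetric])
  also have "{v \<in> V. v \<in> e} = e" using \<open>e \<subseteq> V\<close> by auto
  finally show ?thesis using \<open>card e = 2\<close> by simp
qed

lemma sum_card_neighbours:
  assumes g: "simple_graph V E" and "finite V"
  shows "(\<Sum>v\<in>V. card (neighbours E v)) = 2 * card E"
proof -
  have fE: "finite E" using simple_graph_finite_edges[OF g \<open>finite V\<close>] .
  have "(\<Sum>v\<in>V. card (neighbours E v)) = (\<Sum>v\<in>V. \<Sum>e\<in>E. if v \<in> e then 1 else 0)"
    by (simp add: card_neighbours[OF g] cut_singleton card_filter_eq_sum[OF fE])
  also have "\<dots> = (\<Sum>e\<in>E. \<Sum>v\<in>V. if v \<in> e then 1 else 0)" by (rule sum.swap)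
  also have "\<dots> = (\<Sum>e\<in>E. 2)" using sum_indicator_edge[OF g \<open>finite V\<close>] by (intro sum.cong) auto
  finally show ?thesis by simp
qed

section \<open>Uniform edges from degree-weighted vertices\<close>

definition vertex_mset :: "'v set \<Rightarrow> ('v \<Rightarrow> nat) \<Rightarrow> 'v multiset" where
  "vertex_mset V d = (\<Sum>v\<in>V. replicate_mset (d v) v)"

lemma count_vertex_mset: "finite V \<Longrightarrow> count (vertex_mset V d) x = (if x \<in> V then d x else 0)"
  by (simp add: vertex_mset_def count_sum)

lemma size_vertex_mset: "size (vertex_mset V d) = (\<Sum>v\<in>V. d v)"
  by (simp add: vertex_mset_def size_multiset_sum)

lemma pmf_map_neighbour_edge:
  assumes g: "simple_graph V E" and "finite V" and ne: "neighbours E v \<noteq> {}"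
  shows "pmf (map_pmf (\<lambda>u. {v, u}) (pmf_of_set (neighbours E v))) e
       = (if e \<in> E \<and> v \<in> e then 1 else 0) / card (neighbours E v)"
proof -
  have "pmf (map_pmf (\<lambda>u. {v, u}) (pmf_of_set (neighbours E v))) e
      = card {u \<in> neighbours E v. {v, u} = e} / card (neighbours E v)"
    using finite_neighbours[OF g \<open>finite V\<close>] ne
    by (simp add: pmf_map measure_pmf_of_set vimage_def Int_def)
  also have "card {u \<in> neighbours E v. {v, u} = e} = card {e' \<in> E. v \<in> e' \<and> e' = e}"
    by (rule card_neighbours_filter[OF g])
  also have "{e' \<in> E. v \<in> e' \<and> e' = e} = (if e \<in> E \<and> v \<in> e then {e} else {})" by auto
  finally show ?thesis by simp
qed

theorem degree_weighted_neighbour_edge: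
  assumes g: "simple_graph V E" and "finite V" and "E \<noteq> {}"
  defines "M \<equiv> vertex_mset V (\<lambda>v. card (neighbours E v))"
  shows "bind_pmf (pmf_of_multiset M) (\<lambda>v. map_pmf (\<lambda>u. {v, u}) (pmf_of_set (neighbours E v)))
       = pmf_of_set E"
proof (rule pmf_eqI)
  fix e
  have fE: "finite E" using simple_graph_finite_edges[OF g \<open>finite V\<close>] .
  have "size M = 2 * card E"
    using sum_card_neighbours[OF g \<open>finite V\<close>] by (simp add: M_def size_vertex_mset)
  then have "M \<noteq> {#}" using fE \<open>E \<noteq> {}\<close> by auto
  have count_M: "count M v = (if v \<in> V then card (neighbours E v) else 0)" for v
    using \<open>finite V\<close> by (simp add: M_def count_vertex_mset)
  have pmf_M: "pmf (pmf_of_multiset M) v = count M v / (2 * card E)" for v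
    using \<open>M \<noteq> {#}\<close> \<open>size M = 2 * card E\<close> by simp
  have support: "set_pmf (pmf_of_multiset M) \<subseteq> V"
  proof
    fix x assume "x \<in> set_pmf (pmf_of_multiset M)"
    then have "count M x > 0" using \<open>M \<noteq> {#}\<close> by simp
    then show "x \<in> V" using count_M by (auto split: if_splits)
  qed
  have term_v: "pmf (map_pmf (\<lambda>u. {v, u}) (pmf_of_set (neighbours E v))) e * pmf (pmf_of_multiset M) v
      = (if e \<in> E \<and> v \<in> e then 1 else 0) / (2 * card E)" if "v \<in> V" for v
  proof (cases "neighbours E v = {}")
    case True
    then have "card {e \<in> E. v \<in> e} = 0" using card_neighbours[OF g, of v] by (simp add: cut_singleton)
    then show ?thesis using fE pmf_M count_M True by auto
  next
    case False
    then have "card (neighbours E v) > 0"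
      using finite_neighbours[OF g \<open>finite V\<close>] by (simp add: card_gt_0_iff)
    then show ?thesis
      using pmf_map_neighbour_edge[OF g \<open>finite V\<close> False] pmf_M count_M that by simp
  qed
  have "pmf (bind_pmf (pmf_of_multiset M) (\<lambda>v. map_pmf (\<lambda>u. {v, u}) (pmf_of_set (neighbours E v)))) e
      = (\<Sum>v\<in>V. pmf (map_pmf (\<lambda>u. {v, u}) (pmf_of_set (neighbours E v))) e * pmf (pmf_of_multiset M) v)"
    unfolding pmf_bind using support \<open>finite V\<close> by (intro integral_measure_pmf_real) auto
  also have "\<dots> = (\<Sum>v\<in>V. if e \<in> E \<and> v \<in> e then 1 else 0) / (2 * card E)"
    by (simp add: term_v sum_divide_distrib)
  also have "(\<Sum>v\<in>V. if e \<in> E \<and> v \<in> e then 1 else 0) = (if e \<in> E then 2 else 0::real)"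
    using sum_indicator_edge[OF g \<open>finite V\<close>, of e] by auto
  also have "(if e \<in> E then 2 else 0) / (2 * card E) = pmf (pmf_of_set E) e"
    using fE \<open>E \<noteq> {}\<close> by auto
  finally show "pmf (bind_pmf (pmf_of_multiset M) (\<lambda>v. map_pmf (\<lambda>u. {v, u}) (pmf_of_set (neighbours E v)))) e
      = pmf (pmf_of_set E) e" .
qed

lemma card_neighbours_Int_eq_cuts:
  assumes "simple_graph V E" and "finite E"
  shows "card (neighbours E v \<inter> T) = (cut E {v} + cut E (T - {v}) - cut E (insert v (T - {v}))) div 2"
proof -
  have "neighbours E v \<inter> (T - {v}) = neighbours E v \<inter> T"
    using not_in_neighbours[OF assms(1)] by blast
  then show ?thesis using cut_insert_vertex[OF assms, of v "T - {v}"] by simp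
qed

section \<open>Finding the j-th neighbour by binary search\<close>

text \<open>neighbour_search v d t a b j looks for the neighbour of v of rank j in the interval
  [a, b), where d is the degree of v and t bounds the number of halvings.\<close>
primrec neighbour_search :: "nat \<Rightarrow> nat \<Rightarrow> nat \<Rightarrow> nat \<Rightarrow> nat \<Rightarrow> nat \<Rightarrow> (nat, nat) qalg" where
  "neighbour_search v d 0 a b j = Return a"
| "neighbour_search v d (Suc t) a b j = (if b \<le> Suc a then Return a else
    Query ({a..<(a + b) div 2} - {v}) (\<lambda>c1. Query (insert v ({a..<(a + b) div 2} - {v})) (\<lambda>c2.
      if j < (d + c1 - c2) div 2 then neighbour_search v d t a ((a + b) div 2) j
      else neighbour_search v d t ((a + b) div 2) b (j - (d + c1 - c2) div 2))))"

lemma queries_le_neighbour_search: "queries_le c (neighbour_search v d t a b j) (2 * t)"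
  by (induction t arbitrary: a b j) auto

lemma card_Int_atLeastLessThan_split:
  assumes "(a::nat) \<le> m" and "m \<le> b" and "finite N"
  shows "card (N \<inter> {a..<b}) = card (N \<inter> {a..<m}) + card (N \<inter> {m..<b})"
proof -
  have "N \<inter> {a..<b} = (N \<inter> {a..<m}) \<union> (N \<inter> {m..<b})" using assms(1,2) by auto
  moreover have "(N \<inter> {a..<m}) \<inter> (N \<inter> {m..<b}) = {}" by auto
  ultimately show ?thesis using \<open>finite N\<close> by (simp add: card_Un_disjoint)
qed

lemma rank_in_short_interval:
  assumes "b \<le> Suc a" and "j < card (N \<inter> {a..<b})"
  shows "j = 0 \<and> a \<in> N \<inter> {a..<b}"
proof -
  have "N \<inter> {a..<b} \<subseteq> {a}" using assms(1) by auto
  moreover have "N \<inter> {a..<b} \<noteq> {}" using assms(2) by auto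
  ultimately have "N \<inter> {a..<b} = {a}" by blast
  then show ?thesis using assms(2) by simp
qed

lemma run_neighbour_search:
  assumes g: "simple_graph V E" and "finite V"
    and "b - a \<le> 2 ^ t" and "j < card (neighbours E v \<inter> {a..<b})"
  shows "\<exists>x. run (cut E) (neighbour_search v (cut E {v}) t a b j) = return_pmf x
    \<and> x \<in> neighbours E v \<inter> {a..<b} \<and> card (neighbours E v \<inter> {a..<x}) = j"
  using assms(3,4)
proof (induction t arbitrary: a b j)
  case 0
  then show ?case using rank_in_short_interval[of b a j] by simp
next
  case (Suc t)
  define N where "N = neighbours E v"
  note IH = Suc.IH[folded N_def]
  have "finite N" using finite_neighbours[OF g \<open>finite V\<close>] by (simp add: N_def)
  show ?case unfolding N_def[symmetric]
  proof (cases "b \<le> Suc a")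
    case True
    then show "\<exists>x. run (cut E) (neighbour_search v (cut E {v}) (Suc t) a b j) = return_pmf x
      \<and> x \<in> N \<inter> {a..<b} \<and> card (N \<inter> {a..<x}) = j"
      using rank_in_short_interval[OF True Suc.prems(2)[folded N_def]] by simp
  next
    case False
    define m where "m = (a + b) div 2"
    have "a < m" "m < b" "m - a \<le> 2 ^ t" "b - m \<le> 2 ^ t"
      using False Suc.prems(1) by (auto simp: m_def)
    define l where "l = card (N \<inter> {a..<m})"
    have "(cut E {v} + cut E ({a..<m} - {v}) - cut E (insert v ({a..<m} - {v}))) div 2 = l"
      using card_neighbours_Int_eq_cuts[OF g simple_graph_finite_edges[OF g \<open>finite V\<close>]]
      by (simp add: l_def N_def)
    then have run_step: "run (cut E) (neighbour_search v (cut E {v}) (Suc t) a b j)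
        = run (cut E) (if j < l then neighbour_search v (cut E {v}) t a m j
                       else neighbour_search v (cut E {v}) t m b (j - l))"
      using False by (simp add: m_def)
    have split: "card (N \<inter> {a..<x}) = l + card (N \<inter> {m..<x})" if "m \<le> x" for x
      unfolding l_def using \<open>a < m\<close> that \<open>finite N\<close> by (intro card_Int_atLeastLessThan_split) auto
    show "\<exists>x. run (cut E) (neighbour_search v (cut E {v}) (Suc t) a b j) = return_pmf x
      \<and> x \<in> N \<inter> {a..<b} \<and> card (N \<inter> {a..<x}) = j"
    proof (cases "j < l")
      case True
      then obtain x where "run (cut E) (neighbour_search v (cut E {v}) t a m j) = return_pmf x"
          and "x \<in> N \<inter> {a..<m}" and "card (N \<inter> {a..<x}) = j"
        using IH[OF \<open>m - a \<le> 2 ^ t\<close> True[unfolded l_def]] by blast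
      then show ?thesis using run_step True \<open>m < b\<close> by (intro exI[of _ x]) auto
    next
      case False
      have "j - l < card (N \<inter> {m..<b})"
        using Suc.prems(2)[folded N_def] split[of b] \<open>m < b\<close> False by linarith
      then obtain x where "run (cut E) (neighbour_search v (cut E {v}) t m b (j - l)) = return_pmf x"
          and "x \<in> N \<inter> {m..<b}" and "card (N \<inter> {m..<x}) = j - l"
        using IH[OF \<open>b - m \<le> 2 ^ t\<close> \<open>j - l < card (N \<inter> {m..<b})\<close>] by blast
      moreover from this have "card (N \<inter> {a..<x}) = j" using split[of x] False by simp
      ultimately show ?thesis using run_step False \<open>a < m\<close> by (intro exI[of _ x]) auto
    qed
  qed
qed

text \<open>Ranks of distinct neighbours differ, so a uniform rank gives a uniform neighbour.\<close>
lemma run_neighbour_search_uniform_rank: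
  assumes g: "simple_graph {..<n} E" and "n \<le> 2 ^ t" and ne: "neighbours E v \<noteq> {}"
  shows "bind_pmf (pmf_of_set {..<cut E {v}}) (\<lambda>j. run (cut E) (neighbour_search v (cut E {v}) t 0 n j))
       = pmf_of_set (neighbours E v)"
proof -
  define N where "N = neighbours E v"
  have "finite N" using finite_neighbours[OF g] by (simp add: N_def)
  have "N \<inter> {0..<n} = N" using neighbours_subset[OF g, of v] by (auto simp: N_def)
  have d: "cut E {v} = card N" using card_neighbours[OF g] by (simp add: N_def)
  have "\<exists>x. run (cut E) (neighbour_search v (cut E {v}) t 0 n j) = return_pmf x
          \<and> x \<in> N \<and> card (N \<inter> {0..<x}) = j" if "j \<in> {..<card N}" for j
    using run_neighbour_search[OF g _ _, where a=0 and b=n and t=t and j=j and v=v, folded N_def]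
      \<open>n \<le> 2 ^ t\<close> that unfolding \<open>N \<inter> {0..<n} = N\<close> by simp
  then obtain f where f: "\<And>j. j \<in> {..<card N} \<Longrightarrow>
      run (cut E) (neighbour_search v (cut E {v}) t 0 n j) = return_pmf (f j)
      \<and> f j \<in> N \<and> card (N \<inter> {0..<f j}) = j"
    by metis
  have inj: "inj_on f {..<card N}"
    by (rule inj_onI) (metis f)
  have "f ` {..<card N} = N"
    using f card_image[OF inj] \<open>finite N\<close> by (intro card_subset_eq) auto
  have "0 < card N" using ne \<open>finite N\<close> by (simp add: N_def card_gt_0_iff)
  then have "{..<card N} \<noteq> {}" by auto
  have "bind_pmf (pmf_of_set {..<cut E {v}}) (\<lambda>j. run (cut E) (neighbour_search v (cut E {v}) t 0 n j))
      = bind_pmf (pmf_of_set {..<card N}) (\<lambda>j. return_pmf (f j))"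
    using \<open>{..<card N} \<noteq> {}\<close> f by (intro bind_pmf_cong) (auto simp: d)
  also have "\<dots> = map_pmf f (pmf_of_set {..<card N})" by (simp add: map_pmf_def)
  also have "\<dots> = pmf_of_set N"
    using map_pmf_of_set_inj[OF inj \<open>{..<card N} \<noteq> {}\<close>] \<open>f ` {..<card N} = N\<close> by simp
  finally show ?thesis by (simp add: N_def)
qed

text \<open>The argument ds carries the vertex degrees, read off the singleton cuts.\<close>
definition edge_sampler :: "nat \<Rightarrow> nat \<Rightarrow> nat list \<Rightarrow> (nat, nat set) qalg" where
  "edge_sampler n t ds = Rand (pmf_of_multiset (vertex_mset {..<n} (nth ds))) (\<lambda>v.
     bind_qalg (Rand (pmf_of_set {..<ds ! v}) (neighbour_search v (ds ! v) t 0 n)) (\<lambda>u. Return {v, u}))"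

lemma queries_le_edge_sampler: "queries_le c (edge_sampler n t ds) (2 * t)"
proof -
  have "queries_le c (bind_qalg (Rand p (neighbour_search v d t 0 n)) (\<lambda>u. Return {v, u})) (2 * t + 0)"
    for p v d using queries_le_neighbour_search by (intro queries_le_bind_qalg) auto
  then show ?thesis by (simp add: edge_sampler_def)
qed

lemma run_edge_sampler:
  assumes g: "simple_graph {..<n} E" and "E \<noteq> {}" and "n \<le> 2 ^ t"
  shows "run (cut E) (edge_sampler n t (map (\<lambda>v. cut E {v}) [0..<n])) = pmf_of_set E"
proof -
  define ds where "ds = map (\<lambda>v. cut E {v}) [0..<n]"
  define M where "M = vertex_mset {..<n} (\<lambda>v. card (neighbours E v))"
  have ds: "ds ! v = card (neighbours E v)" "ds ! v = cut E {v}" if "v < n" for v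
    using that card_neighbours[OF g] by (simp_all add: ds_def)
  have "vertex_mset {..<n} (nth ds) = M"
    unfolding M_def vertex_mset_def by (intro sum.cong) (simp_all add: ds)
  have "size M = 2 * card E"
    using sum_card_neighbours[OF g] by (simp add: M_def size_vertex_mset)
  then have "M \<noteq> {#}" using simple_graph_finite_edges[OF g] \<open>E \<noteq> {}\<close> by auto
  have "run (cut E) (edge_sampler n t ds) = bind_pmf (pmf_of_multiset M) (\<lambda>v. map_pmf (\<lambda>u. {v, u})
      (bind_pmf (pmf_of_set {..<ds ! v}) (\<lambda>j. run (cut E) (neighbour_search v (ds ! v) t 0 n j))))"
    unfolding edge_sampler_def map_pmf_def by (simp add: run_bind_qalg bind_assoc_pmf \<open>vertex_mset {..<n} (nth ds) = M\<close>)
  also have "\<dots> = bind_pmf (pmf_of_multiset M) (\<lambda>v. map_pmf (\<lambda>u. {v, u}) (pmf_of_set (neighbours E v)))"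
  proof (rule bind_pmf_cong[OF refl])
    fix v assume "v \<in> set_pmf (pmf_of_multiset M)"
    then have "count M v > 0" using \<open>M \<noteq> {#}\<close> by simp
    then have "v < n" and "neighbours E v \<noteq> {}" by (auto simp: M_def count_vertex_mset split: if_splits)
    then show "map_pmf (\<lambda>u. {v, u}) (bind_pmf (pmf_of_set {..<ds ! v})
        (\<lambda>j. run (cut E) (neighbour_search v (ds ! v) t 0 n j)))
      = map_pmf (\<lambda>u. {v, u}) (pmf_of_set (neighbours E v))"
      using run_neighbour_search_uniform_rank[OF g \<open>n \<le> 2 ^ t\<close>] ds(2) by simp
  qed
  also have "\<dots> = pmf_of_set E"
    using degree_weighted_neighbour_edge[OF g _ \<open>E \<noteq> {}\<close>] by (simp add: M_def)
  finally show ?thesis by (simp add: ds_def)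
qed

definition edge_sampling_algorithm :: "nat \<Rightarrow> nat \<Rightarrow> nat \<Rightarrow> (nat, nat set list) qalg" where
  "edge_sampling_algorithm n t k =
     query_list (map (\<lambda>v. {v}) [0..<n]) (\<lambda>ds. repeat_qalg k (edge_sampler n t ds))"

lemma run_edge_sampling_algorithm:
  assumes "simple_graph {..<n} E" and "E \<noteq> {}" and "n \<le> 2 ^ t"
  shows "run (cut E) (edge_sampling_algorithm n t k) = iid_pmf k (pmf_of_set E)"
  unfolding edge_sampling_algorithm_def run_query_list
  using run_edge_sampler[OF assms] by (simp add: run_repeat_qalg comp_def)

lemma queries_le_edge_sampling_algorithm:
  "queries_le c (edge_sampling_algorithm n t k) (n + k * (2 * t))"
proof -
  have "queries_le c (query_list (map (\<lambda>v. {v}) [0..<n]) (\<lambda>ds. repeat_qalg k (edge_sampler n t ds)))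
      (length (map (\<lambda>v. {v}) [0..<n]) + k * (2 * t))"
    by (intro queries_le_query_list queries_le_repeat_qalg queries_le_edge_sampler)
  then show ?thesis by (simp add: edge_sampling_algorithm_def)
qed

lemma nat_ceiling_log2_bounds:
  assumes "(n::nat) \<ge> 2"
  shows "n \<le> 2 ^ nat \<lceil>log 2 n\<rceil>" and "nat \<lceil>log 2 n\<rceil> \<le> 2 * log 2 n"
proof -
  have "log 2 n \<ge> 1" using assms by simp
  have "real n = 2 powr log 2 n" using assms by simp
  also have "\<dots> \<le> 2 powr nat \<lceil>log 2 n\<rceil>" using \<open>log 2 n \<ge> 1\<close> by (intro powr_mono) linarith+
  finally show "n \<le> 2 ^ nat \<lceil>log 2 n\<rceil>"
    by (simp add: powr_realpow flip: of_nat_le_iff)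
  show "nat \<lceil>log 2 n\<rceil> \<le> 2 * log 2 n" using \<open>log 2 n \<ge> 1\<close> by linarith
qed

theorem mainTheorem4:
  "\<exists>C::real. C > 0 \<and>
     (\<forall>n::nat. n \<ge> 2 \<longrightarrow> (\<forall>k::nat. k \<ge> 1 \<longrightarrow>
       (\<exists>A :: (nat, nat set list) qalg.
          \<forall>E :: nat set set. simple_graph {..<n} E \<and> E \<noteq> {} \<longrightarrow>
             run (cut E) A = iid_pmf k (pmf_of_set E) \<and>
             queries_le (cut E) A (n + nat \<lceil>C * real k * log 2 (real n)\<rceil>))))"
proof (intro exI[of _ 4] conjI allI impI)
  fix n k :: nat assume "n \<ge> 2"
  define t where "t = nat \<lceil>log 2 n\<rceil>"
  have "n \<le> 2 ^ t" and "t \<le> 2 * log 2 n"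
    using nat_ceiling_log2_bounds[OF \<open>n \<ge> 2\<close>] by (simp_all add: t_def)
  have "real (k * (2 * t)) = 2 * real k * t" by simp
  also have "\<dots> \<le> 2 * real k * (2 * log 2 n)" using \<open>t \<le> 2 * log 2 n\<close> by (intro mult_left_mono) auto
  also have "\<dots> \<le> real_of_int \<lceil>4 * real k * log 2 n\<rceil>" by linarith
  finally have "real (k * (2 * t)) \<le> real_of_int \<lceil>4 * real k * log 2 n\<rceil>" .
  then have budget: "k * (2 * t) \<le> nat \<lceil>4 * real k * log 2 n\<rceil>" by linarith
  show "\<exists>A. \<forall>E. simple_graph {..<n} E \<and> E \<noteq> {} \<longrightarrow>
      run (cut E) A = iid_pmf k (pmf_of_set E) \<and>
      queries_le (cut E) A (n + nat \<lceil>4 * real k * log 2 n\<rceil>)"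
    using run_edge_sampling_algorithm[OF _ _ \<open>n \<le> 2 ^ t\<close>] budget
      queries_le_mono[OF queries_le_edge_sampling_algorithm] by (intro exI[of _ "edge_sampling_algorithm n t k"]) simp
qed simp

end
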